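(* Let $(X,d)$ be a compact metric space and $f_{0,\infty}=\{f_n\}_{n=0}^\infty$ an equi-continuous sequence of continuous self-maps of $X$. If $h(f_{0,\infty})>0$, then $h^{*}(f_{0,\infty})=+\infty$.
   Context: $f_{0,\infty}$ is equi-continuous if for every $\epsilon>0$ there is $\delta>0$ with $d(x,y)<\delta\Rightarrow d(f_n x,f_n y)<\epsilon$ for all $n\ge0$. $f_0^n=f_{n-1}\circ\cdots\circ f_0$, $f_0^0=\mathrm{id}$. $\mathcal S$ is the set of strictly increasing sequences $A=\{a_i\}_{i\ge1}$ of nonnegative integers and $h_A(f_{0,\infty})=\sup_{\mathscr A}\limsup_{n\to\infty}\frac1n\log\mathcal N(\bigvee_{i=1}^n (f_0^{a_i})^{-1}\mathscr A)$ over finite open covers $\mathscr A$, with $\bigvee$ the common refinement and $\mathcal N$ the minimal cardinality of a subcover. The topological entropy is $h(f_{0,\infty})=h_A(f_{0,\infty})$ for $A=\{0,1,2,\dots\}$, and the supremum topological sequence entropy is $h^*(f_{0,\infty})=\sup_{A\in\mathcal S}h_A(f_{0,\infty})$. *)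

theory Defs
  imports "HOL-Analysis.Analysis" "HOL-Library.Liminf_Limsup"
begin

primrec nacomp :: "(nat \<Rightarrow> 'a \<Rightarrow> 'a) \<Rightarrow> nat \<Rightarrow> 'a \<Rightarrow> 'a" where
  "nacomp f 0 = id"
| "nacomp f (Suc n) = f n \<circ> nacomp f n"

definition equicont_seq :: "'a::metric_space set \<Rightarrow> (nat \<Rightarrow> 'a \<Rightarrow> 'a) \<Rightarrow> bool" where
  "equicont_seq X f \<longleftrightarrow> (\<forall>\<epsilon>>0. \<exists>\<delta>>0. \<forall>x\<in>X. \<forall>y\<in>X.
      dist x y < \<delta> \<longrightarrow> (\<forall>n. dist (f n x) (f n y) < \<epsilon>))"

definition open_covers :: "'a::topological_space set \<Rightarrow> 'a set set set" where
  "open_covers X = {\<A>. finite \<A> \<and> (\<forall>U\<in>\<A>. openin (top_of_set X) U) \<and> \<Union>\<A> = X}"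

definition Ncov :: "'a set \<Rightarrow> 'a set set \<Rightarrow> nat" where
  "Ncov X \<A> = (LEAST k. \<exists>\<B>\<subseteq>\<A>. finite \<B> \<and> card \<B> = k \<and> \<Union>\<B> = X)"

text \<open>Common refinement of the covers (f_0^{a_i})^{-1} A, i = 1..n
  (indices shifted: a 0, ..., a (n-1)).\<close>
definition join_pre :: "'a set \<Rightarrow> (nat \<Rightarrow> 'a \<Rightarrow> 'a) \<Rightarrow> (nat \<Rightarrow> nat) \<Rightarrow> 'a set set \<Rightarrow> nat \<Rightarrow> 'a set set" where
  "join_pre X f a \<A> n =
     {X \<inter> (\<Inter>i<n. nacomp f (a i) -` U i) | U. \<forall>i<n. U i \<in> \<A>}"

definition seq_entropy :: "'a::topological_space set \<Rightarrow> (nat \<Rightarrow> 'a \<Rightarrow> 'a) \<Rightarrow> (nat \<Rightarrow> nat) \<Rightarrow> ereal" where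
  "seq_entropy X f a = (SUP \<A>\<in>open_covers X.
      limsup (\<lambda>n. ereal (ln (real (Ncov X (join_pre X f a \<A> n))) / real n)))"

definition top_entropy :: "'a::topological_space set \<Rightarrow> (nat \<Rightarrow> 'a \<Rightarrow> 'a) \<Rightarrow> ereal" where
  "top_entropy X f = seq_entropy X f id"

definition sup_seq_entropy :: "'a::topological_space set \<Rightarrow> (nat \<Rightarrow> 'a \<Rightarrow> 'a) \<Rightarrow> ereal" where
  "sup_seq_entropy X f = (SUP a\<in>{a. strict_mono a}. seq_entropy X f a)"

end

theory Submission
  imports Defs
begin

text \<open>Fix a finite open cover A such that, along a subsequence of m, the join of A over
  the times 0, ..., m - 1 needs more than exp(c m) sets to cover X, with c > 0, and fix k \<ge> 1.
  Let \<delta> be a Lebesgue number of A. By equicontinuity there is \<eta> > 0 such that any k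
  consecutive maps keep \<eta>-close points \<delta>-close; so if B is a cover by sets of diameter < \<eta>,
  every member of the join of B over the times 0, k, ..., k (n - 1) lies in a member of the
  join of A over the times 0, ..., k n - 1. Hence the sequence of multiples of k has entropy
  at least c k / 2, and k is arbitrary.\<close>

lemma nacomp_add: "nacomp f (s + r) = nacomp (\<lambda>j. f (j + s)) r \<circ> nacomp f s"
  by (induction r) (auto simp: add.commute)

lemma nacomp_in:
  assumes "\<And>n. f n ` X \<subseteq> X" "x \<in> X"
  shows "nacomp f r x \<in> X"
  using assms by (induction r) auto

lemma equicont_seq_nacomp:
  assumes equicont: "equicont_seq X f" and inv: "\<And>n. f n ` X \<subseteq> X" and "0 < \<epsilon>"
  obtains \<eta> where "0 < \<eta>"
    "\<And>s r x y. r \<le> k \<Longrightarrow> x \<in> X \<Longrightarrow> y \<in> X \<Longrightarrow> dist x y < \<eta> \<Longrightarrow>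
       dist (nacomp (\<lambda>j. f (j + s)) r x) (nacomp (\<lambda>j. f (j + s)) r y) < \<epsilon>"
  using \<open>0 < \<epsilon>\<close>
proof (induction k arbitrary: \<epsilon> thesis)
  case 0
  then show ?case by auto
next
  case (Suc k)
  obtain d where "0 < d"
    and d: "\<forall>x\<in>X. \<forall>y\<in>X. dist x y < d \<longrightarrow> (\<forall>n. dist (f n x) (f n y) < \<epsilon>)"
    using equicont[unfolded equicont_seq_def, rule_format, OF \<open>0 < \<epsilon>\<close>] by blast
  obtain \<eta> where "0 < \<eta>" and \<eta>: "\<And>s r x y. r \<le> k \<Longrightarrow> x \<in> X \<Longrightarrow> y \<in> X \<Longrightarrow> dist x y < \<eta> \<Longrightarrow>
       dist (nacomp (\<lambda>j. f (j + s)) r x) (nacomp (\<lambda>j. f (j + s)) r y) < min \<epsilon> d"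
    using Suc.IH[of "min \<epsilon> d"] \<open>0 < \<epsilon>\<close> \<open>0 < d\<close> by auto
  have step: "dist (nacomp (\<lambda>j. f (j + s)) r x) (nacomp (\<lambda>j. f (j + s)) r y) < \<epsilon>"
    if "r \<le> Suc k" "x \<in> X" "y \<in> X" "dist x y < \<eta>" for s r x y
  proof (cases "r \<le> k")
    case True
    then show ?thesis using \<eta>[OF True that(2-4)] by simp
  next
    case False
    then have "r = Suc k" using that(1) by simp
    have inv_shift: "\<And>n. (\<lambda>j. f (j + s)) n ` X \<subseteq> X" using inv by blast
    have "nacomp (\<lambda>j. f (j + s)) k x \<in> X" "nacomp (\<lambda>j. f (j + s)) k y \<in> X"
      using nacomp_in[OF inv_shift that(2)] nacomp_in[OF inv_shift that(3)] .
    moreover have "dist (nacomp (\<lambda>j. f (j + s)) k x) (nacomp (\<lambda>j. f (j + s)) k y) < d"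
      using \<eta>[OF order_refl that(2-4)] by simp
    ultimately show ?thesis using d \<open>r = Suc k\<close> by simp
  qed
  show ?case using \<open>0 < \<eta>\<close> step by (rule Suc.prems(1))
qed

lemma Ncov_le:
  assumes "S \<subseteq> D" "finite S" "\<Union>S = X"
  shows "Ncov X D \<le> card S"
  unfolding Ncov_def using assms by (intro Least_le) blast

lemma Ncov_attained:
  assumes "S \<subseteq> D" "finite S" "\<Union>S = X"
  obtains T where "T \<subseteq> D" "finite T" "\<Union>T = X" "card T = Ncov X D"
proof -
  have "\<exists>k. \<exists>T\<subseteq>D. finite T \<and> card T = k \<and> \<Union>T = X" using assms by blast
  from LeastI_ex[OF this] show ?thesis using that unfolding Ncov_def by blast
qed

lemma Ncov_le_if_refines:
  assumes "finite C" "\<Union>C = X" "\<And>W. W \<in> D \<Longrightarrow> W \<subseteq> X"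
    and refines: "\<And>V. V \<in> C \<Longrightarrow> V \<noteq> {} \<Longrightarrow> \<exists>W\<in>D. V \<subseteq> W"
  shows "Ncov X D \<le> Ncov X C"
proof -
  obtain S where S: "S \<subseteq> C" "finite S" "\<Union>S = X" "card S = Ncov X C"
    using Ncov_attained[OF order_refl assms(1,2)] by blast
  have "\<forall>V\<in>S - {{}}. \<exists>W. W \<in> D \<and> V \<subseteq> W" using refines S(1) by auto
  then obtain W where W: "\<forall>V\<in>S - {{}}. W V \<in> D \<and> V \<subseteq> W V" by (rule bchoice[THEN exE])
  have "W ` (S - {{}}) \<subseteq> D" using W by blast
  moreover have "\<Union>(W ` (S - {{}})) = X"
  proof
    show "\<Union>(W ` (S - {{}})) \<subseteq> X" using W assms(3) by blast
    show "X \<subseteq> \<Union>(W ` (S - {{}}))"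
    proof
      fix x assume "x \<in> X"
      then obtain V where "V \<in> S" "x \<in> V" using S(3) by blast
      then show "x \<in> \<Union>(W ` (S - {{}}))" using W by blast
    qed
  qed
  ultimately have "Ncov X D \<le> card (W ` (S - {{}}))" using Ncov_le S(2) by blast
  also have "\<dots> \<le> card S" using S(2) by (meson card_image_le card_mono Diff_subset finite_Diff order_trans)
  finally show ?thesis using S(4) by simp
qed

lemma join_pre_finite:
  assumes "finite B"
  shows "finite (join_pre X f a B n)"
proof -
  have sub: "join_pre X f a B n \<subseteq> (\<lambda>U. X \<inter> (\<Inter>i<n. nacomp f (a i) -` U i)) ` (PiE {..<n} (\<lambda>_. B))"
  proof
    fix V assume "V \<in> join_pre X f a B n"
    then obtain U where U: "\<forall>i<n. U i \<in> B" "V = X \<inter> (\<Inter>i<n. nacomp f (a i) -` U i)"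
      unfolding join_pre_def by blast
    then have "restrict U {..<n} \<in> PiE {..<n} (\<lambda>_. B)"
      "V = X \<inter> (\<Inter>i<n. nacomp f (a i) -` restrict U {..<n} i)" by auto
    then show "V \<in> (\<lambda>U. X \<inter> (\<Inter>i<n. nacomp f (a i) -` U i)) ` (PiE {..<n} (\<lambda>_. B))"
      by blast
  qed
  have "finite (PiE {..<n} (\<lambda>_. B))" using assms by (simp add: finite_PiE)
  then show ?thesis by (rule finite_subset[OF sub finite_imageI])
qed

lemma join_pre_subset: "W \<in> join_pre X f a B n \<Longrightarrow> W \<subseteq> X"
  unfolding join_pre_def by blast

lemma join_pre_cover:
  assumes "\<Union>B = X" "\<And>n. f n ` X \<subseteq> X"
  shows "\<Union>(join_pre X f a B n) = X"
proof
  show "\<Union>(join_pre X f a B n) \<subseteq> X" using join_pre_subset by blast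
  show "X \<subseteq> \<Union>(join_pre X f a B n)"
  proof
    fix x assume "x \<in> X"
    have "\<exists>V. V \<in> B \<and> nacomp f (a i) x \<in> V" for i
      using assms(1) nacomp_in[of f X, OF assms(2) \<open>x \<in> X\<close>] by blast
    then obtain U where "\<And>i. U i \<in> B \<and> nacomp f (a i) x \<in> U i" by metis
    then have "x \<in> X \<inter> (\<Inter>i<n. nacomp f (a i) -` U i)"
      "X \<inter> (\<Inter>i<n. nacomp f (a i) -` U i) \<in> join_pre X f a B n"
      using \<open>x \<in> X\<close> unfolding join_pre_def by auto
    then show "x \<in> \<Union>(join_pre X f a B n)" by blast
  qed
qed

lemma open_covers_Lebesgue_number:
  assumes "compact X" "A \<in> open_covers X"
  obtains \<delta> where "0 < \<delta>" "\<And>x. x \<in> X \<Longrightarrow> \<exists>U\<in>A. ball x \<delta> \<inter> X \<subseteq> U"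
proof -
  define G where "G = {T. open T \<and> X \<inter> T \<in> A}"
  have "X \<subseteq> \<Union>G"
  proof
    fix x assume "x \<in> X"
    then obtain U where U: "U \<in> A" "x \<in> U" using assms(2) unfolding open_covers_def by blast
    then have "openin (top_of_set X) U" using assms(2) unfolding open_covers_def by blast
    then obtain T where "open T" "U = X \<inter> T" unfolding openin_open by blast
    then show "x \<in> \<Union>G" using U unfolding G_def by blast
  qed
  then obtain \<delta> where "0 < \<delta>" and \<delta>: "\<And>x. x \<in> X \<Longrightarrow> \<exists>T\<in>G. ball x \<delta> \<subseteq> T"
    using Heine_Borel_lemma[OF assms(1)] unfolding G_def by blast
  show ?thesis
  proof (rule that[OF \<open>0 < \<delta>\<close>])
    fix x assume "x \<in> X"
    then obtain T where "T \<in> G" "ball x \<delta> \<subseteq> T" using \<delta> by blast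
    then show "\<exists>U\<in>A. ball x \<delta> \<inter> X \<subseteq> U" unfolding G_def by blast
  qed
qed

lemma open_covers_small_diameter:
  fixes X :: "'a::metric_space set"
  assumes "compact X" "0 < \<eta>"
  obtains B where "B \<in> open_covers X" "\<And>V y z. V \<in> B \<Longrightarrow> y \<in> V \<Longrightarrow> z \<in> V \<Longrightarrow> dist y z < \<eta>"
proof -
  obtain C where C: "C \<subseteq> X" "finite C" "X \<subseteq> (\<Union>x\<in>C. ball x (\<eta>/2))"
    using compactE_image[OF assms(1), of X "\<lambda>x. ball x (\<eta>/2)"] assms(2) by force
  define B where "B = (\<lambda>x. X \<inter> ball x (\<eta>/2)) ` C"
  have "B \<in> open_covers X"
    using C unfolding open_covers_def B_def by (auto intro: openin_open_Int)
  moreover have "dist y z < \<eta>" if "V \<in> B" "y \<in> V" "z \<in> V" for V y z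
  proof -
    obtain x where "V = X \<inter> ball x (\<eta>/2)" using \<open>V \<in> B\<close> unfolding B_def by blast
    then have "dist x y < \<eta>/2" "dist x z < \<eta>/2" using that(2,3) by auto
    then show ?thesis using dist_triangle3[of y z x] by linarith
  qed
  ultimately show ?thesis using that by blast
qed

lemma join_pre_mult_refines_join_pre:
  fixes X :: "'a::metric_space set"
  assumes inv: "\<And>n. f n ` X \<subseteq> X"
    and lebesgue: "\<And>x. x \<in> X \<Longrightarrow> \<exists>U\<in>A. ball x \<delta> \<inter> X \<subseteq> U"
    and small: "\<And>V y z. V \<in> B \<Longrightarrow> y \<in> V \<Longrightarrow> z \<in> V \<Longrightarrow> dist y z < \<eta>"
    and block: "\<And>s r x y. r < k \<Longrightarrow> x \<in> X \<Longrightarrow> y \<in> X \<Longrightarrow> dist x y < \<eta> \<Longrightarrow>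
       dist (nacomp (\<lambda>j. f (j + s)) r x) (nacomp (\<lambda>j. f (j + s)) r y) < \<delta>"
    and "m \<le> k * n" "V \<in> join_pre X f ((*) k) B n" "V \<noteq> {}"
  shows "\<exists>W\<in>join_pre X f id A m. V \<subseteq> W"
proof -
  obtain U where U: "\<forall>i<n. U i \<in> B" and V: "V = X \<inter> (\<Inter>i<n. nacomp f (k * i) -` U i)"
    using assms(6) unfolding join_pre_def by blast
  obtain x0 where "x0 \<in> V" using \<open>V \<noteq> {}\<close> by blast
  then have "x0 \<in> X" using V by blast
  have "\<exists>U'. U' \<in> A \<and> ball (nacomp f j x0) \<delta> \<inter> X \<subseteq> U'" for j
    using lebesgue[OF nacomp_in[of f X, OF inv \<open>x0 \<in> X\<close>]] by blast
  then obtain U' where U': "\<And>j. U' j \<in> A \<and> ball (nacomp f j x0) \<delta> \<inter> X \<subseteq> U' j" by metis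
  have "nacomp f j y \<in> U' j" if "y \<in> V" "j < m" for y j
  proof -
    have "y \<in> X" using \<open>y \<in> V\<close> V by blast
    define i r where "i = j div k" and "r = j mod k"
    have "0 < k" using \<open>j < m\<close> \<open>m \<le> k * n\<close> by (cases k) auto
    then have "j = k * i + r" "r < k" by (simp_all add: i_def r_def)
    then have "k * i < k * n" using \<open>j < m\<close> \<open>m \<le> k * n\<close> by linarith
    then have "i < n" by simp
    have "nacomp f (k * i) x0 \<in> U i" "nacomp f (k * i) y \<in> U i"
      using \<open>x0 \<in> V\<close> \<open>y \<in> V\<close> \<open>i < n\<close> V by auto
    then have "dist (nacomp f (k * i) x0) (nacomp f (k * i) y) < \<eta>"
      using small U \<open>i < n\<close> by blast
    moreover have "nacomp f j = nacomp (\<lambda>l. f (l + k * i)) r \<circ> nacomp f (k * i)"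
      using nacomp_add[of f "k * i" r] \<open>j = k * i + r\<close> by simp
    ultimately have "dist (nacomp f j x0) (nacomp f j y) < \<delta>"
      using block[OF \<open>r < k\<close> nacomp_in[of f X, OF inv \<open>x0 \<in> X\<close>] nacomp_in[of f X, OF inv \<open>y \<in> X\<close>]]
      by simp
    then have "nacomp f j y \<in> ball (nacomp f j x0) \<delta> \<inter> X"
      using nacomp_in[of f X, OF inv \<open>y \<in> X\<close>] by simp
    then show ?thesis using U' by blast
  qed
  then have "V \<subseteq> X \<inter> (\<Inter>j<m. nacomp f j -` U' j)" using V by blast
  moreover have "X \<inter> (\<Inter>j<m. nacomp f j -` U' j) \<in> join_pre X f id A m"
    unfolding join_pre_def using U' by auto
  ultimately show ?thesis by blast
qed

lemma Ncov_join_le_Ncov_join_mult: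
  fixes X :: "'a::metric_space set"
  assumes "compact X" "\<And>n. f n ` X \<subseteq> X" "equicont_seq X f" "A \<in> open_covers X"
  obtains B where "B \<in> open_covers X"
    "\<And>m n. m \<le> k * n \<Longrightarrow> Ncov X (join_pre X f id A m) \<le> Ncov X (join_pre X f ((*) k) B n)"
proof -
  obtain \<delta> where "0 < \<delta>" and lebesgue: "\<And>x. x \<in> X \<Longrightarrow> \<exists>U\<in>A. ball x \<delta> \<inter> X \<subseteq> U"
    using open_covers_Lebesgue_number[OF assms(1,4)] by blast
  obtain \<eta> where "0 < \<eta>" and block_le: "\<And>s r x y. r \<le> k \<Longrightarrow> x \<in> X \<Longrightarrow> y \<in> X \<Longrightarrow> dist x y < \<eta> \<Longrightarrow>
       dist (nacomp (\<lambda>j. f (j + s)) r x) (nacomp (\<lambda>j. f (j + s)) r y) < \<delta>"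
    using equicont_seq_nacomp[OF assms(3,2) \<open>0 < \<delta>\<close>, where k = k] by blast
  obtain B where B: "B \<in> open_covers X"
    and small: "\<And>V y z. V \<in> B \<Longrightarrow> y \<in> V \<Longrightarrow> z \<in> V \<Longrightarrow> dist y z < \<eta>"
    using open_covers_small_diameter[OF assms(1) \<open>0 < \<eta>\<close>] by blast
  have "finite B" "\<Union>B = X" using B unfolding open_covers_def by auto
  have block: "dist (nacomp (\<lambda>j. f (j + s)) r x) (nacomp (\<lambda>j. f (j + s)) r y) < \<delta>"
    if "r < k" "x \<in> X" "y \<in> X" "dist x y < \<eta>" for s r x y
    using block_le[OF less_imp_le[OF that(1)] that(2-4)] .
  show ?thesis
  proof (rule that[OF B])
    fix m n :: nat assume "m \<le> k * n"
    show "Ncov X (join_pre X f id A m) \<le> Ncov X (join_pre X f ((*) k) B n)"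
    proof (rule Ncov_le_if_refines)
      show "finite (join_pre X f ((*) k) B n)" using \<open>finite B\<close> by (rule join_pre_finite)
      show "\<Union>(join_pre X f ((*) k) B n) = X" using \<open>\<Union>B = X\<close> assms(2) by (rule join_pre_cover)
      show "\<And>W. W \<in> join_pre X f id A m \<Longrightarrow> W \<subseteq> X" by (rule join_pre_subset)
      show "\<And>V. V \<in> join_pre X f ((*) k) B n \<Longrightarrow> V \<noteq> {} \<Longrightarrow> \<exists>W\<in>join_pre X f id A m. V \<subseteq> W"
        by (rule join_pre_mult_refines_join_pre[OF assms(2) lebesgue small block \<open>m \<le> k * n\<close>])
    qed
  qed
qed

lemma less_LimsupD:
  fixes f :: "'a \<Rightarrow> 'b::complete_linorder"
  assumes "y < Limsup F f"
  shows "\<exists>\<^sub>F x in F. y < f x"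
proof (rule ccontr)
  assume "\<not> (\<exists>\<^sub>F x in F. y < f x)"
  then have "\<forall>\<^sub>F x in F. f x \<le> y" by (simp add: not_frequently not_less)
  then have "Limsup F f \<le> y" by (rule Limsup_bounded)
  with assms show False by simp
qed

lemma frequently_le_Limsup:
  fixes f :: "'a \<Rightarrow> 'b::complete_linorder"
  assumes "\<exists>\<^sub>F x in F. y \<le> f x"
  shows "y \<le> Limsup F f"
proof (rule ccontr)
  assume "\<not> y \<le> Limsup F f"
  then have "\<forall>\<^sub>F x in F. f x < y" by (intro Limsup_lessD) (simp add: not_le)
  with assms show False by (simp add: frequently_def not_le)
qed

lemma limsup_ln_div_rescale:
  fixes u v :: "nat \<Rightarrow> nat" and c :: real
  assumes k: "0 < k" and c: "0 \<le> c"
    and less: "ereal c < limsup (\<lambda>m. ereal (ln (real (u m)) / real m))"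
    and uv: "\<And>m n. m \<le> k * n \<Longrightarrow> u m \<le> v n"
  shows "ereal (c * k / 2) \<le> limsup (\<lambda>n. ereal (ln (real (v n)) / real n))"
proof (rule frequently_le_Limsup, unfold frequently_sequentially, intro allI)
  fix N
  have "\<exists>\<^sub>F m in sequentially. c < ln (real (u m)) / real m"
    using less_LimsupD[OF less] by simp
  then obtain m where m: "N * k + k \<le> m" "c < ln (real (u m)) / real m"
    unfolding frequently_sequentially by blast
  \<comment> \<open>Rounding m / k up gives k n \<le> 2 m once m \<ge> k; this costs the factor 1/2.\<close>
  define n where "n = m div k + 1"
  have "m = k * (m div k) + m mod k" "m mod k < k" using k by simp_all
  then have "m \<le> k * n" and "k * n \<le> 2 * m"
    using m(1) unfolding n_def distrib_left mult_1_right by linarith+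
  have "N * k div k \<le> m div k" using m(1) by (intro div_le_mono) simp
  then have "N \<le> n" using k by (simp add: n_def)
  have "0 < m" using m(1) k by simp
  then have "c * m < ln (u m)" using m(2) by (simp add: field_simps)
  moreover have "0 \<le> c * m" using c by simp
  ultimately have "0 < u m" by (cases "u m = 0") auto
  have kn: "real k * n \<le> 2 * m" using \<open>k * n \<le> 2 * m\<close> by (metis of_nat_le_iff of_nat_mult of_nat_numeral)
  have "c * k / 2 * n \<le> c * m" using mult_left_mono[OF kn c] by simp
  also have "\<dots> < ln (u m)" by fact
  also have "\<dots> \<le> ln (v n)" using \<open>0 < u m\<close> uv[OF \<open>m \<le> k * n\<close>] by simp
  finally have "c * k / 2 \<le> ln (v n) / n" using \<open>N \<le> n\<close> by (simp add: n_def field_simps)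
  then show "\<exists>n\<ge>N. ereal (c * k / 2) \<le> ereal (ln (real (v n)) / real n)"
    using \<open>N \<le> n\<close> by auto
qed

lemma seq_entropy_mult_ge:
  fixes X :: "'a::metric_space set"
  assumes "compact X" "\<And>n. f n ` X \<subseteq> X" "equicont_seq X f"
    and "0 < k" "0 \<le> c" "ereal c < top_entropy X f"
  shows "ereal (c * k / 2) \<le> seq_entropy X f ((*) k)"
proof -
  obtain A where "A \<in> open_covers X"
    and less: "ereal c < limsup (\<lambda>m. ereal (ln (real (Ncov X (join_pre X f id A m))) / real m))"
    using assms(6) unfolding top_entropy_def seq_entropy_def by (auto simp: less_SUP_iff)
  obtain B where "B \<in> open_covers X"
    and le: "\<And>m n. m \<le> k * n \<Longrightarrow> Ncov X (join_pre X f id A m) \<le> Ncov X (join_pre X f ((*) k) B n)"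
    using Ncov_join_le_Ncov_join_mult[OF assms(1-3) \<open>A \<in> open_covers X\<close>, where k = k] by blast
  have "ereal (c * k / 2) \<le> limsup (\<lambda>n. ereal (ln (real (Ncov X (join_pre X f ((*) k) B n))) / real n))"
    by (rule limsup_ln_div_rescale[OF assms(4,5) less le])
  also have "\<dots> \<le> seq_entropy X f ((*) k)"
    unfolding seq_entropy_def using \<open>B \<in> open_covers X\<close> by (rule SUP_upper)
  finally show ?thesis .
qed

theorem proposition4p3:
  fixes X :: "'a::metric_space set" and f :: "nat \<Rightarrow> 'a \<Rightarrow> 'a"
  assumes "compact X"
    and "\<And>n. continuous_on X (f n)"
    and "\<And>n. f n ` X \<subseteq> X"
    and "equicont_seq X f"
    and "top_entropy X f > 0"
  shows "sup_seq_entropy X f = \<infinity>"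
proof (rule ereal_top)
  obtain c where "0 < c" "ereal c < top_entropy X f"
    using ereal_dense2[OF assms(5)] by auto
  fix M
  obtain k :: nat where "max 1 (2 * M / c) < k" using reals_Archimedean2 by blast
  then have "0 < k" "M \<le> c * k / 2" using \<open>0 < c\<close> by (auto simp: field_simps)
  then have "ereal M \<le> ereal (c * k / 2)" by simp
  also have "\<dots> \<le> seq_entropy X f ((*) k)"
    using seq_entropy_mult_ge[OF assms(1,3,4) \<open>0 < k\<close>] \<open>0 < c\<close> \<open>ereal c < top_entropy X f\<close> by simp
  also have "\<dots> \<le> sup_seq_entropy X f"
    unfolding sup_seq_entropy_def using \<open>0 < k\<close> by (intro SUP_upper) (simp add: strict_mono_def)
  finally show "ereal M \<le> sup_seq_entropy X f" .
qed

end
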